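(* For every integer $h\ge 0$, the generating function $M^{\le h}(z)=\sum_{n\ge0} m_{n,h} z^n$, where $m_{n,h}$ is the number of Motzkin paths of length $n$ and height at most $h$, satisfies $$M^{\le h}(z)=(1+v+v^2)\,\frac{1-v^{2h+2}}{1-v^{2h+4}},$$ and the generating function $N^{\le h}(z)=\sum_{n\ge0} n_{n,h} z^n$, where $n_{n,h}$ is the number of Motzkin paths of length $n$ and height at most $h$ having no horizontal step on level $h$, satisfies $$N^{\le h}(z)=(1+v+v^2)\,\frac{1-v^{2h+1}}{1-v^{2h+3}}.$$ Both identities hold as identities of formal power series in $z$.
   Context: A Motzkin path of length $n$ is a sequence of $n$ steps, each an up-step $(1,1)$, a down-step $(1,-1)$ or a horizontal step $(1,0)$, starting at $(0,0)$, ending at $(n,0)$, and never going below the $x$-axis. Its height is the maximal $y$-coordinate reached. A horizontal step on level $j$ is a horizontal step from $(x,j)$ to $(x+1,j)$. Throughout, $v=v(z)=\frac{1-z-\sqrt{1-2z-3z^2}}{2z}=z+z^2+\cdots$ denotes the formal power series with $v(0)=0$ satisfying $z=\frac{v}{1+v+v^2}$. *)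

theory Defs
  imports "HOL-Computational_Algebra.Formal_Power_Series"
begin

datatype step = U | D | H

fun step_val :: "step \<Rightarrow> int" where
  "step_val U = 1" | "step_val D = -1" | "step_val H = 0"

definition ht :: "step list \<Rightarrow> nat \<Rightarrow> int" where
  "ht xs k = sum_list (map step_val (take k xs))"

definition motzkin :: "step list \<Rightarrow> bool" where
  "motzkin xs \<longleftrightarrow> (\<forall>k\<le>length xs. 0 \<le> ht xs k) \<and> ht xs (length xs) = 0"

definition height_le :: "step list \<Rightarrow> nat \<Rightarrow> bool" where
  "height_le xs h \<longleftrightarrow> (\<forall>k\<le>length xs. ht xs k \<le> int h)"

definition no_hor_on_level :: "step list \<Rightarrow> nat \<Rightarrow> bool" where
  "no_hor_on_level xs h \<longleftrightarrow> (\<forall>k<length xs. xs ! k = H \<longrightarrow> ht xs k \<noteq> int h)"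

definition m_count :: "nat \<Rightarrow> nat \<Rightarrow> nat" where
  "m_count n h = card {xs. length xs = n \<and> motzkin xs \<and> height_le xs h}"

definition n_count :: "nat \<Rightarrow> nat \<Rightarrow> nat" where
  "n_count n h = card {xs. length xs = n \<and> motzkin xs \<and> height_le xs h \<and> no_hor_on_level xs h}"

text \<open>v: the unique power series with v(0)=0 and z = v/(1+v+v^2), i.e. z(1+v+v^2) = v\<close>
definition vser :: "real fps" where
  "vser = (THE v. fps_nth v 0 = 0 \<and> fps_X * (1 + v + v^2) = v)"

definition Mle :: "nat \<Rightarrow> real fps" where
  "Mle h = Abs_fps (\<lambda>n. real (m_count n h))"

definition Nle :: "nat \<Rightarrow> real fps" where
  "Nle h = Abs_fps (\<lambda>n. real (n_count n h))"

end

theory Submission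
  imports Defs
begin

unbundle fps_syntax

text \<open>
  Let \<open>F\<^sub>h\<close> count Motzkin paths in the strip \<open>0 \<le> y \<le> h\<close>. Splitting a nonempty path at its
  first step gives either a horizontal step followed by a path counted by \<open>F\<^sub>h\<close>, or an up-step,
  a path in the strip \<open>1 \<le> y \<le> h\<close> (counted by \<open>F\<^sub>h\<^sub>-\<^sub>1\<close>), the first return to level 0 and a
  path counted by \<open>F\<^sub>h\<close>. Hence \<open>F\<^sub>h = 1/(1 - z - z\<^sup>2 F\<^sub>h\<^sub>-\<^sub>1)\<close>; forbidding horizontal steps on the top
  level only changes the case \<open>h = 0\<close>, where \<open>F\<^sub>0 = 1\<close>. Writing \<open>c = 1 + v + v\<^sup>2\<close>, so that
  \<open>z c = v\<close>, the functions \<open>f\<^sub>k = c (1 - v\<^sup>k)/(1 - v\<^sup>k\<^sup>+\<^sup>2)\<close> satisfy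
  \<open>f\<^sub>k\<^sub>+\<^sub>2 (1 - z - z\<^sup>2 f\<^sub>k) = 1\<close>, \<open>f\<^sub>0 = 0\<close> and \<open>f\<^sub>1 = 1\<close>, and induction on \<open>h\<close> finishes the proof.
\<close>

subsection \<open>The series v\<close>

lemma vser_equation_solvable: "\<exists>v::real fps. v $ 0 = 0 \<and> fps_X * (1 + v + v\<^sup>2) = v"
proof -
  define q :: "real fps" where "q = 1 + fps_X + fps_X\<^sup>2"
  define w where "w = fps_inv (fps_X * inverse q)"
  have q0: "q $ 0 = 1" by (simp add: q_def)
  have w0: "w $ 0 = 0" by (simp add: w_def fps_inv_def)
  have "fps_X * inverse q oo w = fps_X"
    unfolding w_def by (rule fps_inv_right) (use q0 in auto)
  moreover have "fps_X * inverse q oo w = w * (inverse q oo w)"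
    by (simp add: fps_compose_mult_distrib[OF w0] w0)
  moreover have "(inverse q oo w) * (q oo w) = 1"
    using fps_compose_mult_distrib[OF w0, of "inverse q" q, symmetric] inverse_mult_eq_1[of q] q0
    by simp
  moreover have "q oo w = 1 + w + w\<^sup>2"
    unfolding q_def by (simp add: fps_compose_add_distrib fps_compose_power[OF w0, symmetric] w0)
  ultimately have "fps_X * (1 + w + w\<^sup>2) = w"
    by (metis mult.assoc mult.right_neutral)
  then show ?thesis using w0 by blast
qed

lemma vser_equation_unique:
  fixes v w :: "real fps"
  assumes v: "v $ 0 = 0" "fps_X * (1 + v + v\<^sup>2) = v"
    and w: "w $ 0 = 0" "fps_X * (1 + w + w\<^sup>2) = w"
  shows "v = w"
proof (rule fps_ext)
  have nth_Suc: "u $ Suc m = 1 $ m + u $ m + (\<Sum>i=0..m. u $ i * u $ (m - i))"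
    if "fps_X * (1 + u + u\<^sup>2) = u" for u :: "real fps" and m
  proof -
    have "(fps_X * (1 + u + u\<^sup>2)) $ Suc m = (1 + u + u\<^sup>2) $ m" by simp
    also have "\<dots> = 1 $ m + u $ m + (\<Sum>i=0..m. u $ i * u $ (m - i))"
      by (simp add: power2_eq_square fps_mult_nth)
    finally show ?thesis using that by simp
  qed
  fix n show "v $ n = w $ n"
  proof (induction n rule: less_induct)
    case (less n)
    show ?case
    proof (cases n)
      case 0 then show ?thesis using v w by simp
    next
      case (Suc m)
      have "(\<Sum>i=0..m. v $ i * v $ (m - i)) = (\<Sum>i=0..m. w $ i * w $ (m - i))"
        by (rule sum.cong) (use less Suc in auto)
      then show ?thesis using nth_Suc[OF v(2)] nth_Suc[OF w(2)] less Suc by simp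
    qed
  qed
qed

lemma vser_nth_0: "vser $ 0 = 0"
  and X_times_vser_poly: "fps_X * (1 + vser + vser\<^sup>2) = vser"
proof -
  have "\<exists>!v::real fps. v $ 0 = 0 \<and> fps_X * (1 + v + v\<^sup>2) = v"
    using vser_equation_solvable vser_equation_unique by blast
  then have "vser $ 0 = 0 \<and> fps_X * (1 + vser + vser\<^sup>2) = vser"
    unfolding vser_def by (rule theI')
  then show "vser $ 0 = 0" "fps_X * (1 + vser + vser\<^sup>2) = vser" by auto
qed

lemma one_minus_vser_power_nth_0: "0 < k \<Longrightarrow> (1 - vser ^ k) $ 0 \<noteq> 0"
  by (simp only: fps_sub_nth fps_power_zeroth vser_nth_0) (simp add: zero_power)

lemma one_minus_vser_power_nonzero: "0 < k \<Longrightarrow> 1 - vser ^ k \<noteq> 0"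
  using one_minus_vser_power_nth_0 by (metis fps_zero_nth)

subsection \<open>Walks in a strip\<close>

fun strip_walk :: "int \<Rightarrow> int \<Rightarrow> bool \<Rightarrow> int \<Rightarrow> int \<Rightarrow> step list \<Rightarrow> bool" where
  "strip_walk lo hi flat a e [] \<longleftrightarrow> lo \<le> a \<and> a \<le> hi \<and> a = e"
| "strip_walk lo hi flat a e (x # xs) \<longleftrightarrow> lo \<le> a \<and> a \<le> hi \<and> (x = H \<longrightarrow> flat \<or> a \<noteq> hi)
     \<and> strip_walk lo hi flat (a + step_val x) e xs"

lemma ht_0 [simp]: "ht xs 0 = 0"
  by (simp add: ht_def)

lemma ht_Cons_Suc [simp]: "ht (x # xs) (Suc k) = step_val x + ht xs k"
  by (simp add: ht_def)

lemma all_le_Suc_iff: "(\<forall>k\<le>Suc n. P k) \<longleftrightarrow> P 0 \<and> (\<forall>k\<le>n. P (Suc k))"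
  by (metis Suc_le_mono le0 not0_implies_Suc)

lemma all_less_Suc_iff: "(\<forall>k<Suc n. P k) \<longleftrightarrow> P 0 \<and> (\<forall>k<n. P (Suc k))"
  by (metis Suc_less_eq not0_implies_Suc zero_less_Suc)

lemma strip_walk_iff_ht:
  "strip_walk lo hi flat a e xs \<longleftrightarrow>
     (\<forall>k\<le>length xs. lo \<le> a + ht xs k \<and> a + ht xs k \<le> hi) \<and> a + ht xs (length xs) = e
     \<and> (\<not> flat \<longrightarrow> (\<forall>k<length xs. xs ! k = H \<longrightarrow> a + ht xs k \<noteq> hi))"
proof (induction xs arbitrary: a)
  case Nil
  then show ?case by auto
next
  case (Cons x xs)
  show ?case
    unfolding strip_walk.simps Cons.IH length_Cons all_le_Suc_iff all_less_Suc_iff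
    by (simp add: add.assoc) blast
qed

lemma strip_walk_range: "strip_walk lo hi flat a e xs \<Longrightarrow> lo \<le> a \<and> a \<le> hi"
  by (cases xs) auto

lemma strip_walk_append:
  "strip_walk lo hi flat a e (xs @ ys) \<longleftrightarrow>
     (\<exists>m. strip_walk lo hi flat a m xs \<and> strip_walk lo hi flat m e ys)"
  by (induction xs arbitrary: a) (auto dest: strip_walk_range)

lemma strip_walk_shift:
  "strip_walk (lo + c) (hi + c) flat (a + c) (e + c) xs = strip_walk lo hi flat a e xs"
proof (induction xs arbitrary: a)
  case Nil
  then show ?case by auto
next
  case (Cons x xs)
  have "a + c + step_val x = (a + step_val x) + c" by simp
  then show ?case by (simp only: strip_walk.simps Cons.IH[of "a + step_val x"]) simp
qed

lemma strip_walk_widen: "strip_walk lo' hi flat a e xs \<Longrightarrow> lo \<le> lo' \<Longrightarrow> strip_walk lo hi flat a e xs"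
  by (induction xs arbitrary: a) auto

lemma strip_walk_first_return:
  assumes "strip_walk lo hi flat a lo ys" "lo < a"
  shows "\<exists>p q. ys = p @ D # q \<and> strip_walk (lo + 1) hi flat a (lo + 1) p \<and> strip_walk lo hi flat lo lo q"
  using assms
proof (induction ys arbitrary: a)
  case Nil
  then show ?case by simp
next
  case (Cons x zs)
  show ?case
  proof (cases "x = D \<and> a = lo + 1")
    case True
    then show ?thesis using Cons.prems by (intro exI[of _ "[]"] exI[of _ zs]) auto
  next
    case False
    have walk: "strip_walk lo hi flat (a + step_val x) lo zs"
      and top: "a \<le> hi" "x = H \<longrightarrow> flat \<or> a \<noteq> hi"
      using Cons.prems by auto
    have "lo < a + step_val x" using False Cons.prems(2) by (cases x) auto
    from Cons.IH[OF walk this] obtain p q where "zs = p @ D # q"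
      "strip_walk (lo + 1) hi flat (a + step_val x) (lo + 1) p" "strip_walk lo hi flat lo lo q"
      by blast
    then show ?thesis using top Cons.prems(2) by (intro exI[of _ "x # p"] exI[of _ q]) auto
  qed
qed

lemma strip_walk_first_return_unique:
  "strip_walk lo hi flat a lo p \<Longrightarrow> strip_walk lo hi flat a lo p' \<Longrightarrow> p @ D # q = p' @ D # q' \<Longrightarrow> p = p'"
proof (induction p arbitrary: a p')
  case Nil
  then show ?case by (cases p') (auto dest: strip_walk_range)
next
  case (Cons x r)
  then show ?case by (cases p') (auto dest: strip_walk_range)
qed

subsection \<open>Counting excursions\<close>

definition strip_excursions :: "int \<Rightarrow> int \<Rightarrow> bool \<Rightarrow> nat \<Rightarrow> step list set" where
  "strip_excursions lo hi flat n = {xs. length xs = n \<and> strip_walk lo hi flat lo lo xs}"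

lemma finite_strip_excursions: "finite (strip_excursions lo hi flat n)"
proof -
  have steps: "(UNIV :: step set) = {U, D, H}"
    using step.exhaust by auto
  have "finite {xs. set xs \<subseteq> (UNIV :: step set) \<and> length xs = n}"
    by (rule finite_lists_length_eq) (simp add: steps)
  then show ?thesis
    by (rule finite_subset[rotated]) (auto simp: strip_excursions_def)
qed

lemma strip_excursions_0: "0 \<le> hi \<Longrightarrow> strip_excursions 0 hi flat 0 = {[]}"
  by (auto simp: strip_excursions_def)

lemma strip_excursions_shift: "strip_excursions 1 (hi + 1) flat n = strip_excursions 0 hi flat n"
  using strip_walk_shift[of 0 1 hi flat 0 0] by (simp add: strip_excursions_def)

lemma strip_excursions_empty_strip: "strip_excursions 1 0 flat n = {}"
  by (auto simp: strip_excursions_def dest: strip_walk_range)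

lemma strip_excursions_Suc:
  assumes "0 \<le> hi"
  shows "strip_excursions 0 hi flat (Suc m) =
     (if flat \<or> hi \<noteq> 0 then Cons H ` strip_excursions 0 hi flat m else {}) \<union>
     (\<Union>i<m. (\<lambda>(p, q). U # p @ D # q) ` (strip_excursions 1 hi flat i \<times> strip_excursions 0 hi flat (m - 1 - i)))"
    (is "?L = ?A \<union> ?B")
proof (rule set_eqI, rule iffI)
  fix xs assume "xs \<in> ?L"
  then obtain x ys where xs: "xs = x # ys" and len: "length ys = m"
    and walk: "strip_walk 0 hi flat 0 0 (x # ys)"
    by (cases xs) (auto simp: strip_excursions_def)
  show "xs \<in> ?A \<union> ?B"
  proof (cases x)
    case U
    then have "strip_walk 0 hi flat 1 0 ys" using walk by simp
    from strip_walk_first_return[OF this] obtain p q where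
      pq: "ys = p @ D # q" "strip_walk 1 hi flat 1 1 p" "strip_walk 0 hi flat 0 0 q" by auto
    have "length p < m" "length q = m - 1 - length p" using len pq(1) by auto
    then have "xs \<in> ?B" using pq U xs
      by (auto simp: strip_excursions_def intro!: bexI[of _ "length p"] image_eqI[of _ _ "(p, q)"])
    then show ?thesis by blast
  next
    case D
    then show ?thesis using walk strip_walk_range[of 0 hi flat "-1" 0 ys] by simp
  next
    case H
    then show ?thesis using walk len xs by (auto simp: strip_excursions_def)
  qed
next
  fix xs assume "xs \<in> ?A \<union> ?B"
  then show "xs \<in> ?L"
  proof
    assume "xs \<in> ?A" then show ?thesis using assms by (auto simp: strip_excursions_def split: if_splits)
  next
    assume "xs \<in> ?B"
    then obtain i p q where i: "i < m" and p: "length p = i" "strip_walk 1 hi flat 1 1 p"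
      and q: "length q = m - 1 - i" "strip_walk 0 hi flat 0 0 q" and xs: "xs = U # p @ D # q"
      by (auto simp: strip_excursions_def)
    have "1 \<le> hi" using strip_walk_range[OF p(2)] by simp
    then have "strip_walk 0 hi flat 1 0 (D # q)" using q by simp
    moreover have "strip_walk 0 hi flat 1 1 p" using strip_walk_widen[OF p(2)] by simp
    ultimately have "strip_walk 0 hi flat 1 0 (p @ D # q)" using strip_walk_append by blast
    then show ?thesis using xs assms p q i by (simp add: strip_excursions_def)
  qed
qed

lemma card_strip_excursions_Suc:
  assumes "0 \<le> hi"
  shows "card (strip_excursions 0 hi flat (Suc m)) =
     (if flat \<or> hi \<noteq> 0 then card (strip_excursions 0 hi flat m) else 0) +
     (\<Sum>i<m. card (strip_excursions 1 hi flat i) * card (strip_excursions 0 hi flat (m - 1 - i)))"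
proof -
  let ?f = "\<lambda>(p, q). U # p @ D # q"
  let ?P = "\<lambda>i. strip_excursions 1 hi flat i \<times> strip_excursions 0 hi flat (m - 1 - i)"
  let ?A = "if flat \<or> hi \<noteq> 0 then Cons H ` strip_excursions 0 hi flat m else {}"
  let ?B = "\<Union>i<m. ?f ` ?P i"
  have inj: "inj_on ?f (strip_excursions 1 hi flat i \<times> X)" for i X
    by (auto simp: inj_on_def strip_excursions_def dest: strip_walk_first_return_unique)
  have "card ?A = (if flat \<or> hi \<noteq> 0 then card (strip_excursions 0 hi flat m) else 0)"
    by (auto simp: card_image)
  moreover have "card ?B = (\<Sum>i<m. card (?f ` ?P i))"
  proof (rule card_UN_disjoint)
    show "\<forall>i\<in>{..<m}. finite (?f ` ?P i)" by (simp add: finite_strip_excursions)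
    show "\<forall>i\<in>{..<m}. \<forall>j\<in>{..<m}. i \<noteq> j \<longrightarrow> ?f ` ?P i \<inter> ?f ` ?P j = {}"
      by (auto simp: strip_excursions_def dest: strip_walk_first_return_unique)
  qed simp
  moreover have "(\<Sum>i<m. card (?f ` ?P i)) =
      (\<Sum>i<m. card (strip_excursions 1 hi flat i) * card (strip_excursions 0 hi flat (m - 1 - i)))"
    by (rule sum.cong) (auto simp: card_image[OF inj] card_cartesian_product)
  moreover have "card (?A \<union> ?B) = card ?A + card ?B"
    by (rule card_Un_disjoint) (auto simp: finite_strip_excursions)
  ultimately show ?thesis
    unfolding strip_excursions_Suc[OF assms] by (simp only:)
qed

lemma m_count_eq_card_strip_excursions: "m_count n h = card (strip_excursions 0 (int h) True n)"
  unfolding m_count_def strip_excursions_def motzkin_def height_le_def strip_walk_iff_ht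
  by (rule arg_cong[of _ _ card]) auto

lemma n_count_eq_card_strip_excursions: "n_count n h = card (strip_excursions 0 (int h) False n)"
  unfolding n_count_def strip_excursions_def motzkin_def height_le_def no_hor_on_level_def strip_walk_iff_ht
  by (rule arg_cong[of _ _ card]) auto

subsection \<open>Generating functions\<close>

definition excursion_gf :: "int \<Rightarrow> int \<Rightarrow> bool \<Rightarrow> real fps" where
  "excursion_gf lo hi flat = Abs_fps (\<lambda>n. real (card (strip_excursions lo hi flat n)))"

lemma excursion_gf_empty_strip: "excursion_gf 1 0 flat = 0"
  by (simp add: excursion_gf_def strip_excursions_empty_strip fps_eq_iff)

lemma excursion_gf_shift: "excursion_gf 1 (hi + 1) flat = excursion_gf 0 hi flat"
  by (simp add: excursion_gf_def strip_excursions_shift)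

lemma excursion_gf_first_return:
  assumes "0 \<le> hi"
  shows "excursion_gf 0 hi flat = 1 + (if flat \<or> hi \<noteq> 0 then fps_X * excursion_gf 0 hi flat else 0)
           + fps_X\<^sup>2 * (excursion_gf 1 hi flat * excursion_gf 0 hi flat)"
    (is "?F = 1 + ?H + fps_X\<^sup>2 * (?G * ?F)")
proof (rule fps_ext)
  fix n
  show "?F $ n = (1 + ?H + fps_X\<^sup>2 * (?G * ?F)) $ n"
  proof (cases n)
    case 0
    then show ?thesis using assms by (simp add: excursion_gf_def strip_excursions_0)
  next
    case (Suc m)
    have "(fps_X\<^sup>2 * (?G * ?F)) $ Suc m = (\<Sum>i<m. ?G $ i * ?F $ (m - 1 - i))"
    proof (cases m)
      case (Suc k)
      have "(fps_X\<^sup>2 * (?G * ?F)) $ Suc m = (?G * ?F) $ k"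
        unfolding fps_X_power_mult_nth using Suc by simp
      also have "\<dots> = (\<Sum>i=0..k. ?G $ i * ?F $ (k - i))" by (rule fps_mult_nth)
      also have "{0..k} = {..<m}" using Suc by auto
      finally show ?thesis using Suc by simp
    qed (simp add: fps_X_power_mult_nth)
    then show ?thesis
      using card_strip_excursions_Suc[OF assms, of flat m] Suc by (simp add: excursion_gf_def)
  qed
qed

lemma fixpoint_times_one_minus:
  fixes f a b :: "'a :: comm_ring_1"
  assumes "f = 1 + a * f + b * f"
  shows "f * (1 - a - b) = 1"
  using assms by (simp add: algebra_simps)

lemma excursion_gf_recursion:
  assumes "0 \<le> hi"
  shows "excursion_gf 0 hi flat * (1 - (if flat \<or> hi \<noteq> 0 then fps_X else 0) - fps_X\<^sup>2 * excursion_gf 1 hi flat) = 1"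
proof (rule fixpoint_times_one_minus)
  let ?F = "excursion_gf 0 hi flat"
  show "?F = 1 + (if flat \<or> hi \<noteq> 0 then fps_X else 0) * ?F + fps_X\<^sup>2 * excursion_gf 1 hi flat * ?F"
    using excursion_gf_first_return[OF assms, of flat]
    by (simp only: if_distrib[of "\<lambda>a. a * ?F"] mult_zero_left mult.assoc)
qed

subsection \<open>Solving the recursion\<close>

lemma mult_left_inverse_unique:
  fixes a b e :: "'a :: comm_monoid_mult"
  assumes "a * e = 1" "b * e = 1"
  shows "a = b"
  by (metis assms mult.assoc mult.commute mult_1_right)

lemma telescoping_identity:
  fixes v :: "'a :: comm_ring_1"
  shows "(1 + v + v\<^sup>2) * (1 - v ^ (k + 2)) - v * (1 - v ^ (k + 2)) - v * (v * (1 - v ^ k))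
    = 1 * (1 - v ^ (k + 2 + 2))"
  by (simp add: power_add power2_eq_square algebra_simps)

definition vfrac :: "nat \<Rightarrow> real fps" where
  "vfrac k = (1 + vser + vser\<^sup>2) * (1 - vser ^ k) / (1 - vser ^ (k + 2))"

lemma vfrac_times_denominator: "vfrac k * (1 - vser ^ (k + 2)) = (1 + vser + vser\<^sup>2) * (1 - vser ^ k)"
proof -
  have "is_unit (1 - vser ^ (k + 2))"
    using one_minus_vser_power_nth_0[of "k + 2"] by simp
  then show ?thesis unfolding vfrac_def by (rule unit_div_mult_self)
qed

lemma vfrac_0: "vfrac 0 = 0"
  by (simp add: vfrac_def)

lemma vfrac_1: "vfrac 1 = 1"
proof -
  have "vfrac 1 * (1 - vser ^ 3) = 1 * (1 - vser ^ 3)"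
    using vfrac_times_denominator[of 1] by (simp add: algebra_simps eval_nat_numeral)
  then show ?thesis
    using one_minus_vser_power_nonzero[of 3] by simp
qed

lemma vfrac_step: "vfrac (k + 2) * (1 - fps_X - fps_X\<^sup>2 * vfrac k) = 1"
proof -
  define c where "c = 1 + vser + vser\<^sup>2"
  define d where "d = 1 - vser ^ (k + 2)"
  define e where "e = 1 - vser ^ k"
  have Xc: "fps_X * c = vser" unfolding c_def by (rule X_times_vser_poly)
  have fd: "vfrac k * d = c * e" unfolding c_def d_def e_def by (rule vfrac_times_denominator)
  have "vfrac (k + 2) * (1 - fps_X - fps_X\<^sup>2 * vfrac k) * (1 - vser ^ (k + 2 + 2))
      = c * d * (1 - fps_X - fps_X\<^sup>2 * vfrac k)"
    using vfrac_times_denominator[of "k + 2"] by (simp add: c_def d_def ac_simps)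
  also have "\<dots> = c * d - (fps_X * c) * d - (fps_X * c) * (fps_X * (vfrac k * d))"
    by (simp add: algebra_simps power2_eq_square)
  also have "\<dots> = c * d - vser * d - vser * (vser * e)"
    unfolding Xc fd mult.assoc[symmetric] ..
  also have "\<dots> = 1 * (1 - vser ^ (k + 2 + 2))"
    unfolding c_def d_def e_def by (rule telescoping_identity)
  finally show ?thesis
    using mult_right_cancel[OF one_minus_vser_power_nonzero[of "k + 2 + 2"]] by simp
qed

lemma excursion_gf_closed_form:
  "excursion_gf 0 (int h) True = vfrac (2 * h + 2) \<and> excursion_gf 0 (int h) False = vfrac (2 * h + 1)"
proof (induction h)
  case 0
  have "excursion_gf 0 0 True * (1 - fps_X - fps_X\<^sup>2 * vfrac 0) = 1"
    using excursion_gf_recursion[of 0 True] by (simp add: excursion_gf_empty_strip vfrac_0)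
  then have "excursion_gf 0 0 True = vfrac 2"
    using vfrac_step[of 0] by (metis mult_left_inverse_unique add_0)
  moreover have "excursion_gf 0 0 False = 1"
    using excursion_gf_recursion[of 0 False] by (simp add: excursion_gf_empty_strip)
  ultimately show ?case
    using vfrac_1 by (simp add: numeral_2_eq_2)
next
  case (Suc h)
  have rec: "excursion_gf 0 (int (Suc h)) flat * (1 - fps_X - fps_X\<^sup>2 * excursion_gf 0 (int h) flat) = 1"
    for flat
    using excursion_gf_recursion[of "int h + 1" flat] excursion_gf_shift[of "int h" flat]
    by (simp add: add.commute)
  have "excursion_gf 0 (int (Suc h)) True = vfrac (2 * h + 2 + 2)"
    using rec[of True] vfrac_step[of "2 * h + 2"] Suc.IH by (metis mult_left_inverse_unique)
  moreover have "excursion_gf 0 (int (Suc h)) False = vfrac (2 * h + 1 + 2)"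
    using rec[of False] vfrac_step[of "2 * h + 1"] Suc.IH by (metis mult_left_inverse_unique)
  ultimately show ?case by (simp add: add.assoc)
qed

theorem mainTheorem1:
  fixes h :: nat
  shows "Mle h = (1 + vser + vser^2) * (1 - vser^(2*h+2)) / (1 - vser^(2*h+4))
       \<and> Nle h = (1 + vser + vser^2) * (1 - vser^(2*h+1)) / (1 - vser^(2*h+3))"
proof -
  have "Mle h = excursion_gf 0 (int h) True"
    by (simp add: Mle_def excursion_gf_def m_count_eq_card_strip_excursions)
  moreover have "Nle h = excursion_gf 0 (int h) False"
    by (simp add: Nle_def excursion_gf_def n_count_eq_card_strip_excursions)
  ultimately show ?thesis
    using excursion_gf_closed_form[of h] by (simp add: vfrac_def eval_nat_numeral)
qed

end
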